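(* Let $P$ be the barycentric subdivision of a simplicial complex $K$. Then the interval monoid $\mathcal{M}(P)$ is a gcd-monoid.
   Context: A simplicial complex $K$ is a collection of nonempty finite subsets (simplices) of a vertex set with all singletons simplices and closed under nonempty subsets. Its barycentric subdivision is the poset of all simplices of $K$ ordered by inclusion. For a poset $P$, $\mathcal{M}(P)$ is the monoid presented by generators $[x,y]$ for $x\le y$ in $P$, relations $[x,x]=1$ and $[x,z]=[x,y][y,z]$ for $x\le y\le z$. A gcd-monoid is a monoid that is conical ($xy=1\Rightarrow x=1$), left and right cancellative, and in which any two elements have a greatest lower bound for left divisibility ($a\leqslant b$ iff $b=ax$ for some $x$) and for right divisibility ($a\mathbin{\widetilde\leqslant}b$ iff $b=xa$ for some $x$). *)

theory Defs
  imports "HOL-Algebra.Group"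
begin

definition simplicial_complex :: "'v set \<Rightarrow> 'v set set \<Rightarrow> bool" where
  "simplicial_complex V K \<longleftrightarrow>
     (\<forall>s\<in>K. finite s \<and> s \<noteq> {} \<and> s \<subseteq> V) \<and>
     (\<forall>v\<in>V. {v} \<in> K) \<and>
     (\<forall>s\<in>K. \<forall>t. t \<subseteq> s \<and> t \<noteq> {} \<longrightarrow> t \<in> K)"

text \<open>The barycentric subdivision is the poset (K, subset); we represent a poset by a carrier
and an order relation.\<close>

definition im_gens :: "'a set \<Rightarrow> ('a \<Rightarrow> 'a \<Rightarrow> bool) \<Rightarrow> ('a \<times> 'a) set" where
  "im_gens A r = {(x, y). x \<in> A \<and> y \<in> A \<and> r x y}"

inductive im_eq :: "'a set \<Rightarrow> ('a \<Rightarrow> 'a \<Rightarrow> bool) \<Rightarrow> ('a \<times> 'a) list \<Rightarrow> ('a \<times> 'a) list \<Rightarrow> bool"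
  for A r where
  im_refl: "set w \<subseteq> im_gens A r \<Longrightarrow> im_eq A r w w"
| im_sym: "im_eq A r u v \<Longrightarrow> im_eq A r v u"
| im_trans: "im_eq A r u v \<Longrightarrow> im_eq A r v w \<Longrightarrow> im_eq A r u w"
| im_unit: "x \<in> A \<Longrightarrow> r x x \<Longrightarrow> im_eq A r [(x, x)] []"
| im_split: "x \<in> A \<Longrightarrow> y \<in> A \<Longrightarrow> z \<in> A \<Longrightarrow> r x y \<Longrightarrow> r y z \<Longrightarrow>
             im_eq A r [(x, z)] [(x, y), (y, z)]"
| im_cong: "im_eq A r u u' \<Longrightarrow> im_eq A r v v' \<Longrightarrow> im_eq A r (u @ v) (u' @ v')"

definition interval_monoid :: "'a set \<Rightarrow> ('a \<Rightarrow> 'a \<Rightarrow> bool) \<Rightarrow> ('a \<times> 'a) list set monoid" where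
  "interval_monoid A r =
     \<lparr> carrier = {{v. im_eq A r u v} | u. set u \<subseteq> im_gens A r},
       mult = (\<lambda>X Y. \<Union>{{w. im_eq A r (u @ v) w} | u v. u \<in> X \<and> v \<in> Y}),
       one = {v. im_eq A r [] v} \<rparr>"

definition left_div :: "('a, 'b) monoid_scheme \<Rightarrow> 'a \<Rightarrow> 'a \<Rightarrow> bool" where
  "left_div G a b \<longleftrightarrow> (\<exists>x\<in>carrier G. b = a \<otimes>\<^bsub>G\<^esub> x)"

definition right_div :: "('a, 'b) monoid_scheme \<Rightarrow> 'a \<Rightarrow> 'a \<Rightarrow> bool" where
  "right_div G a b \<longleftrightarrow> (\<exists>x\<in>carrier G. b = x \<otimes>\<^bsub>G\<^esub> a)"

definition gcd_monoid :: "('a, 'b) monoid_scheme \<Rightarrow> bool" where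
  "gcd_monoid G \<longleftrightarrow>
     monoid G \<and>
     (\<forall>x\<in>carrier G. \<forall>y\<in>carrier G. x \<otimes>\<^bsub>G\<^esub> y = \<one>\<^bsub>G\<^esub> \<longrightarrow> x = \<one>\<^bsub>G\<^esub>) \<and>
     (\<forall>a\<in>carrier G. \<forall>x\<in>carrier G. \<forall>y\<in>carrier G.
        a \<otimes>\<^bsub>G\<^esub> x = a \<otimes>\<^bsub>G\<^esub> y \<longrightarrow> x = y) \<and>
     (\<forall>a\<in>carrier G. \<forall>x\<in>carrier G. \<forall>y\<in>carrier G.
        x \<otimes>\<^bsub>G\<^esub> a = y \<otimes>\<^bsub>G\<^esub> a \<longrightarrow> x = y) \<and>
     (\<forall>a\<in>carrier G. \<forall>b\<in>carrier G. \<exists>d\<in>carrier G.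
        left_div G d a \<and> left_div G d b \<and>
        (\<forall>c\<in>carrier G. left_div G c a \<and> left_div G c b \<longrightarrow> left_div G c d)) \<and>
     (\<forall>a\<in>carrier G. \<forall>b\<in>carrier G. \<exists>d\<in>carrier G.
        right_div G d a \<and> right_div G d b \<and>
        (\<forall>c\<in>carrier G. right_div G c a \<and> right_div G c b \<longrightarrow> right_div G c d))"

end

theory Submission
  imports Defs
begin

text \<open>Every element of the interval monoid of a poset \<open>P\<close> has a unique reduced representative:
a word \<open>[x\<^sub>1,y\<^sub>1]\<dots>[x\<^sub>n,y\<^sub>n]\<close> of proper intervals in which no two consecutive letters
compose (\<open>y\<^sub>i \<noteq> x\<^sub>i\<^sub>+\<^sub>1\<close>). The product of reduced words is their concatenation with the two
letters at the junction composed, if possible. Hence the monoid is conical and left cancellative,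
and \<open>c\<close> left-divides \<open>a\<close> iff \<open>c\<close> agrees with \<open>a\<close> except for its last letter \<open>[x,y]\<close>, which
only has to satisfy \<open>y \<le> y'\<close> for the corresponding letter \<open>[x,y']\<close> of \<open>a\<close>. So left gcds can be
computed letter by letter as soon as any two elements with a common lower bound \<open>x\<close> have a meet,
the gcd of \<open>[x,y]\<close> and \<open>[x,y']\<close> being \<open>[x, y \<sqinter> y']\<close>. In the face poset of a simplicial complex
this meet is the intersection of two faces with a common face.

Reversing words is an anti-isomorphism onto the interval monoid of the opposite poset, which
turns right cancellation and right gcds into left ones. In the opposite face poset two faces of
a common simplex have their union as meet, so the same argument applies.\<close>

section \<open>Cancellation and gcds in monoids\<close>

definition conical :: "('a, 'b) monoid_scheme \<Rightarrow> bool" where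
  "conical G \<longleftrightarrow> (\<forall>x\<in>carrier G. \<forall>y\<in>carrier G. x \<otimes>\<^bsub>G\<^esub> y = \<one>\<^bsub>G\<^esub> \<longrightarrow> x = \<one>\<^bsub>G\<^esub>)"

definition left_cancellative :: "('a, 'b) monoid_scheme \<Rightarrow> bool" where
  "left_cancellative G \<longleftrightarrow>
     (\<forall>a\<in>carrier G. \<forall>x\<in>carrier G. \<forall>y\<in>carrier G. a \<otimes>\<^bsub>G\<^esub> x = a \<otimes>\<^bsub>G\<^esub> y \<longrightarrow> x = y)"

definition right_cancellative :: "('a, 'b) monoid_scheme \<Rightarrow> bool" where
  "right_cancellative G \<longleftrightarrow>
     (\<forall>a\<in>carrier G. \<forall>x\<in>carrier G. \<forall>y\<in>carrier G. x \<otimes>\<^bsub>G\<^esub> a = y \<otimes>\<^bsub>G\<^esub> a \<longrightarrow> x = y)"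

definition is_left_gcd :: "('a, 'b) monoid_scheme \<Rightarrow> 'a \<Rightarrow> 'a \<Rightarrow> 'a \<Rightarrow> bool" where
  "is_left_gcd G d a b \<longleftrightarrow> d \<in> carrier G \<and> left_div G d a \<and> left_div G d b \<and>
     (\<forall>c\<in>carrier G. left_div G c a \<and> left_div G c b \<longrightarrow> left_div G c d)"

definition is_right_gcd :: "('a, 'b) monoid_scheme \<Rightarrow> 'a \<Rightarrow> 'a \<Rightarrow> 'a \<Rightarrow> bool" where
  "is_right_gcd G d a b \<longleftrightarrow> d \<in> carrier G \<and> right_div G d a \<and> right_div G d b \<and>
     (\<forall>c\<in>carrier G. right_div G c a \<and> right_div G c b \<longrightarrow> right_div G c d)"

definition has_left_gcds :: "('a, 'b) monoid_scheme \<Rightarrow> bool" where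
  "has_left_gcds G \<longleftrightarrow> (\<forall>a\<in>carrier G. \<forall>b\<in>carrier G. \<exists>d. is_left_gcd G d a b)"

definition has_right_gcds :: "('a, 'b) monoid_scheme \<Rightarrow> bool" where
  "has_right_gcds G \<longleftrightarrow> (\<forall>a\<in>carrier G. \<forall>b\<in>carrier G. \<exists>d. is_right_gcd G d a b)"

lemma gcd_monoid_iff:
  "gcd_monoid G \<longleftrightarrow> monoid G \<and> conical G \<and> left_cancellative G \<and> right_cancellative G \<and>
     has_left_gcds G \<and> has_right_gcds G"
  unfolding gcd_monoid_def conical_def left_cancellative_def right_cancellative_def
    has_left_gcds_def has_right_gcds_def is_left_gcd_def is_right_gcd_def
  by blast

context
  fixes G :: "('a, 'c) monoid_scheme" and H :: "('b, 'd) monoid_scheme" and F :: "'a \<Rightarrow> 'b"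
  assumes monoid_G: "monoid G"
    and F_bij: "bij_betw F (carrier G) (carrier H)"
    and F_anti: "\<And>x y. x \<in> carrier G \<Longrightarrow> y \<in> carrier G \<Longrightarrow> F (x \<otimes>\<^bsub>G\<^esub> y) = F y \<otimes>\<^bsub>H\<^esub> F x"
begin

private lemma F_in: "x \<in> carrier G \<Longrightarrow> F x \<in> carrier H"
  using F_bij bij_betwE by blast

private lemma F_inj: "x \<in> carrier G \<Longrightarrow> y \<in> carrier G \<Longrightarrow> F x = F y \<Longrightarrow> x = y"
  using F_bij by (auto simp: bij_betw_def dest: inj_onD)

private lemma F_surj:
  assumes "z \<in> carrier H" obtains x where "x \<in> carrier G" "z = F x"
  using F_bij assms by (auto simp: bij_betw_def)

lemma anti_iso_right_div_iff:
  assumes c: "c \<in> carrier G" and a: "a \<in> carrier G"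
  shows "right_div G c a \<longleftrightarrow> left_div H (F c) (F a)"
proof
  assume "right_div G c a"
  then obtain x where "x \<in> carrier G" "a = x \<otimes>\<^bsub>G\<^esub> c" by (auto simp: right_div_def)
  then show "left_div H (F c) (F a)" using F_anti c F_in by (auto simp: left_div_def)
next
  assume "left_div H (F c) (F a)"
  then obtain z where z: "z \<in> carrier H" "F a = F c \<otimes>\<^bsub>H\<^esub> z" by (auto simp: left_div_def)
  obtain x where x: "x \<in> carrier G" "z = F x" using F_surj z(1) by blast
  then have "F a = F (x \<otimes>\<^bsub>G\<^esub> c)" using z F_anti c by simp
  then have "a = x \<otimes>\<^bsub>G\<^esub> c" using F_inj a x c monoid.m_closed[OF monoid_G] by metis
  then show "right_div G c a" using x by (auto simp: right_div_def)
qed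

lemma anti_iso_right_cancellative: "left_cancellative H \<Longrightarrow> right_cancellative G"
  unfolding left_cancellative_def right_cancellative_def
  using F_anti F_in F_inj by metis

lemma anti_iso_has_right_gcds: "has_left_gcds H \<Longrightarrow> has_right_gcds G"
  unfolding has_left_gcds_def has_right_gcds_def
proof (intro ballI)
  fix a b assume gcds: "\<forall>a\<in>carrier H. \<forall>b\<in>carrier H. \<exists>d. is_left_gcd H d a b"
    and a: "a \<in> carrier G" and b: "b \<in> carrier G"
  then obtain d' where d': "is_left_gcd H d' (F a) (F b)" using F_in by blast
  then obtain d where d: "d \<in> carrier G" "d' = F d" by (auto simp: is_left_gcd_def elim: F_surj)
  have "is_right_gcd G d a b"
    using d d' a b F_in anti_iso_right_div_iff by (auto simp: is_left_gcd_def is_right_gcd_def)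
  then show "\<exists>d. is_right_gcd G d a b" ..
qed

end

section \<open>Reduced words\<close>

fun reduce_cons :: "'a \<times> 'a \<Rightarrow> ('a \<times> 'a) list \<Rightarrow> ('a \<times> 'a) list" where
  "reduce_cons g [] = (if fst g = snd g then [] else [g])"
| "reduce_cons g (h # w) = (if fst g = snd g then h # w
      else if snd g = fst h then (fst g, snd h) # w else g # h # w)"

fun reduce :: "('a \<times> 'a) list \<Rightarrow> ('a \<times> 'a) list" where
  "reduce [] = []"
| "reduce (g # w) = reduce_cons g (reduce w)"

fun reduced :: "('a \<times> 'a) list \<Rightarrow> bool" where
  "reduced [] = True"
| "reduced [g] = (fst g \<noteq> snd g)"
| "reduced (g # h # w) = (fst g \<noteq> snd g \<and> snd g \<noteq> fst h \<and> reduced (h # w))"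

definition glue :: "('a \<times> 'a) list \<Rightarrow> ('a \<times> 'a) list \<Rightarrow> ('a \<times> 'a) list" where
  "glue a b = (if a \<noteq> [] \<and> b \<noteq> [] \<and> snd (last a) = fst (hd b)
     then butlast a @ (fst (last a), snd (hd b)) # tl b else a @ b)"

lemma reduced_Cons_tl: "reduced (g # w) \<Longrightarrow> reduced w"
  by (cases w) auto

lemma reduce_reduced: "reduced w \<Longrightarrow> reduce w = w"
  by (induction w rule: reduced.induct) auto

lemma reduce_cons_identity: "fst g = snd g \<Longrightarrow> reduce_cons g w = w"
  by (cases w) auto

lemma reduce_cons_compose:
  "x \<noteq> y \<Longrightarrow> x \<noteq> z \<Longrightarrow> reduce_cons (x, z) w = reduce_cons (x, y) (reduce_cons (y, z) w)"
  by (cases w) auto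

lemma glue_Nil_left [simp]: "glue [] b = b"
  by (simp add: glue_def)

lemma glue_Cons: "a \<noteq> [] \<Longrightarrow> glue (g # a) b = g # glue a b"
  by (auto simp: glue_def)

lemma glue_eq_Nil_iff: "glue a b = [] \<longleftrightarrow> a = [] \<and> b = []"
  by (auto simp: glue_def)

lemma hd_glue: "a \<noteq> [] \<Longrightarrow> fst (hd (glue a b)) = fst (hd a)"
proof (induction a)
  case (Cons g a)
  then show ?case by (cases "a = []") (auto simp: glue_Cons glue_def)
qed simp

lemma reduce_append_reduced: "reduced a \<Longrightarrow> reduced b \<Longrightarrow> reduce (a @ b) = glue a b"
proof (induction a)
  case Nil
  then show ?case by (simp add: reduce_reduced)
next
  case (Cons g a)
  show ?case
  proof (cases "a = []")
    case True
    then show ?thesis using Cons.prems reduce_reduced[of b] by (cases b) (auto simp: glue_def)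
  next
    case False
    have "reduce ((g # a) @ b) = reduce_cons g (glue a b)"
      using Cons by (auto dest: reduced_Cons_tl)
    also have "\<dots> = g # glue a b"
      using hd_glue[OF False, of b] glue_eq_Nil_iff[of a b] Cons.prems False
      by (cases "glue a b"; cases a) auto
    finally show ?thesis using glue_Cons[OF False] by simp
  qed
qed

lemma glue_left_cancel:
  assumes "reduced x" "reduced y" "glue a x = glue a y"
  shows "x = y"
proof (cases a rule: rev_cases)
  case (snoc a0 g)
  obtain g1 g2 where "g = (g1, g2)" by fastforce
  then show ?thesis using assms snoc by (cases x; cases y) (auto simp: glue_def split: if_splits)
qed (use assms in simp)

fun prefix_le :: "('a \<Rightarrow> 'a \<Rightarrow> bool) \<Rightarrow> ('a \<times> 'a) list \<Rightarrow> ('a \<times> 'a) list \<Rightarrow> bool" where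
  "prefix_le r [] a = True"
| "prefix_le r (g # d) [] = False"
| "prefix_le r [g] (h # a) = (fst g = fst h \<and> r (snd g) (snd h))"
| "prefix_le r (g # g' # d) (h # a) = (g = h \<and> prefix_le r (g' # d) a)"

fun prefix_meet :: "('a \<Rightarrow> 'a \<Rightarrow> 'a) \<Rightarrow> ('a \<times> 'a) list \<Rightarrow> ('a \<times> 'a) list \<Rightarrow> ('a \<times> 'a) list" where
  "prefix_meet m (g # a) (h # b) =
     (if g = h then g # prefix_meet m a b
      else if fst g = fst h \<and> fst g \<noteq> m (snd g) (snd h) then [(fst g, m (snd g) (snd h))]
      else [])"
| "prefix_meet m _ _ = []"

lemma hd_prefix_meet:
  "prefix_meet m a b \<noteq> [] \<Longrightarrow> a \<noteq> [] \<and> fst (hd (prefix_meet m a b)) = fst (hd a)"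
  by (induction m a b rule: prefix_meet.induct) (auto split: if_splits)

lemma reduced_prefix_meet: "reduced a \<Longrightarrow> reduced (prefix_meet m a b)"
proof (induction m a b rule: prefix_meet.induct)
  case (1 m g a h b)
  show ?case
  proof (cases "g = h")
    case True
    then have IH: "reduced (prefix_meet m a b)" using 1 by (auto dest: reduced_Cons_tl)
    have "reduced (g # prefix_meet m a b)"
    proof (cases "prefix_meet m a b")
      case (Cons l ls)
      then have "a \<noteq> []" "fst l = fst (hd a)" using hd_prefix_meet[of m a b] by auto
      then show ?thesis using "1.prems" IH Cons by (cases a) auto
    qed (use "1.prems" in \<open>cases a; simp\<close>)
    then show ?thesis using True by simp
  qed auto
qed simp_all

section \<open>The interval monoid of a poset\<close>

lemma mem_im_gens [simp]: "g \<in> im_gens A r \<longleftrightarrow> fst g \<in> A \<and> snd g \<in> A \<and> r (fst g) (snd g)"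
  by (cases g) (simp add: im_gens_def)

lemma carrier_interval_monoid:
  "carrier (interval_monoid A r) = (\<lambda>u. {v. im_eq A r u v}) ` {u. set u \<subseteq> im_gens A r}"
  by (auto simp: interval_monoid_def)

lemma mult_interval_monoid:
  "X \<otimes>\<^bsub>interval_monoid A r\<^esub> Y = (\<Union>u\<in>X. \<Union>v\<in>Y. {w. im_eq A r (u @ v) w})"
  by (auto simp: interval_monoid_def)

locale poset_on =
  fixes A :: "'a set" and r :: "'a \<Rightarrow> 'a \<Rightarrow> bool"
  assumes refl_on: "x \<in> A \<Longrightarrow> r x x"
    and trans_on: "x \<in> A \<Longrightarrow> y \<in> A \<Longrightarrow> z \<in> A \<Longrightarrow> r x y \<Longrightarrow> r y z \<Longrightarrow> r x z"
    and antisym_on: "x \<in> A \<Longrightarrow> y \<in> A \<Longrightarrow> r x y \<Longrightarrow> r y x \<Longrightarrow> x = y"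
begin

abbreviation gen_word :: "('a \<times> 'a) list \<Rightarrow> bool" where
  "gen_word w \<equiv> set w \<subseteq> im_gens A r"

lemma compose_proper:
  "x \<in> A \<Longrightarrow> y \<in> A \<Longrightarrow> z \<in> A \<Longrightarrow> r x y \<Longrightarrow> r y z \<Longrightarrow> x \<noteq> y \<Longrightarrow> x \<noteq> z"
  using antisym_on trans_on by blast

lemma gen_word_reduce_cons: "gen_word (g # w) \<Longrightarrow> gen_word (reduce_cons g w)"
  by (cases w) (auto simp: im_gens_def intro: trans_on)

lemma gen_word_reduce: "gen_word w \<Longrightarrow> gen_word (reduce w)"
proof (induction w)
  case (Cons g w)
  then show ?case using gen_word_reduce_cons[of g "reduce w"] by simp
qed simp

lemma reduce_reduce_cons_append:
  assumes "gen_word (g # w)"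
  shows "reduce (reduce_cons g w @ v) = reduce_cons g (reduce (w @ v))"
proof (cases w)
  case Nil
  then show ?thesis by (cases "fst g = snd g") (auto simp: reduce_cons_identity)
next
  case (Cons h w')
  obtain x y y' z where g: "g = (x, y)" and h: "h = (y', z)" by fastforce
  show ?thesis
  proof (cases "x = y \<or> y \<noteq> y'")
    case True
    then show ?thesis using Cons g h by (auto simp: reduce_cons_identity)
  next
    case False
    then have "x \<noteq> y" "y = y'" by auto
    moreover from this have "x \<noteq> z" using assms Cons g h compose_proper[of x y z] by auto
    ultimately show ?thesis using Cons g h reduce_cons_compose[of x y z] by simp
  qed
qed

lemma reduce_idem: "gen_word w \<Longrightarrow> reduce (reduce w) = reduce w"
proof (induction w)
  case (Cons g w)
  have "reduce (reduce (g # w)) = reduce (reduce_cons g (reduce w) @ [])" by simp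
  also have "\<dots> = reduce_cons g (reduce (reduce w @ []))"
    using Cons.prems gen_word_reduce[of w] by (intro reduce_reduce_cons_append) auto
  finally show ?case using Cons by simp
qed simp

lemma reduce_append_reduce_right: "gen_word v \<Longrightarrow> reduce (u @ v) = reduce (u @ reduce v)"
  by (induction u) (auto simp: reduce_idem)

lemma reduce_append_reduce_left: "gen_word u \<Longrightarrow> reduce (u @ v) = reduce (reduce u @ v)"
proof (induction u)
  case (Cons g u)
  have "reduce ((g # u) @ v) = reduce_cons g (reduce (reduce u @ v))" using Cons by simp
  also have "\<dots> = reduce (reduce_cons g (reduce u) @ v)"
    using Cons.prems gen_word_reduce[of u] by (intro reduce_reduce_cons_append[symmetric]) auto
  finally show ?case by simp
qed simp

lemma reduce_append:
  "gen_word u \<Longrightarrow> gen_word v \<Longrightarrow> reduce (u @ v) = reduce (reduce u @ reduce v)"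
  using reduce_append_reduce_left reduce_append_reduce_right by metis

lemma reduced_reduce_cons: "gen_word (g # w) \<Longrightarrow> reduced w \<Longrightarrow> reduced (reduce_cons g w)"
proof (cases w)
  case (Cons h w')
  assume gw: "gen_word (g # w)" and rw: "reduced w"
  obtain x y y' z where g: "g = (x, y)" and h: "h = (y', z)" by fastforce
  show ?thesis
  proof (cases "x \<noteq> y \<and> y = y'")
    case True
    then have "x \<noteq> z" using gw Cons g h compose_proper[of x y z] by auto
    then show ?thesis using Cons g h True rw by (cases w') auto
  qed (use Cons g h rw in auto)
qed simp

lemma reduced_reduce: "gen_word w \<Longrightarrow> reduced (reduce w)"
proof (induction w)
  case (Cons g w)
  then show ?case using reduced_reduce_cons[of g "reduce w"] gen_word_reduce[of w] by simp
qed simp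

lemma im_eq_imp_reduce_eq: "im_eq A r u v \<Longrightarrow> gen_word u \<and> gen_word v \<and> reduce u = reduce v"
proof (induction rule: im_eq.induct)
  case (im_split x y z)
  have "reduce [(x, z)] = reduce [(x, y), (y, z)]"
  proof (cases "x = y")
    case False
    then have "x \<noteq> z" using compose_proper[of x y z] im_split by auto
    then show ?thesis using False by (cases "y = z") auto
  qed simp
  then show ?case using im_split trans_on[of x y z] by auto
next
  case (im_cong u u' v v')
  then show ?case using reduce_append[of u v] reduce_append[of u' v'] by auto
qed (auto simp: im_gens_def refl_on)

lemma im_eq_reduce_cons: "gen_word (g # w) \<Longrightarrow> im_eq A r (g # w) (reduce_cons g w)"
proof -
  assume gw: "gen_word (g # w)"
  obtain x y where g: "g = (x, y)" by fastforce
  show ?thesis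
  proof (cases w)
    case Nil
    then show ?thesis using gw g by (auto intro: im_refl im_unit)
  next
    case (Cons h w')
    obtain y' z where h: "h = (y', z)" by fastforce
    have w': "gen_word w'" using gw Cons by auto
    consider "x = y" | "x \<noteq> y" "y = y'" | "x \<noteq> y" "y \<noteq> y'" by blast
    then show ?thesis
    proof cases
      case 1
      then have "im_eq A r ([(x, x)] @ w) ([] @ w)"
        using gw g by (intro im_cong[OF im_unit im_refl]) auto
      then show ?thesis using 1 g by (simp add: reduce_cons_identity)
    next
      case 2
      then have "im_eq A r ([(x, y), (y, z)] @ w') ([(x, z)] @ w')"
        using gw g h Cons w' by (intro im_cong[OF im_sym[OF im_split] im_refl]) auto
      then show ?thesis using 2 g h Cons by simp
    next
      case 3
      then show ?thesis using gw g h Cons by (simp add: im_refl)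
    qed
  qed
qed

lemma im_eq_reduce: "gen_word w \<Longrightarrow> im_eq A r w (reduce w)"
proof (induction w)
  case (Cons g w)
  then have "im_eq A r ([g] @ w) ([g] @ reduce w)" by (intro im_cong[OF im_refl]) auto
  moreover have "im_eq A r (g # reduce w) (reduce_cons g (reduce w))"
    using Cons.prems gen_word_reduce[of w] by (intro im_eq_reduce_cons) auto
  ultimately show ?case by (auto intro: im_trans)
qed (simp add: im_refl)

lemma im_eq_iff: "im_eq A r u v \<longleftrightarrow> gen_word u \<and> gen_word v \<and> reduce u = reduce v"
  using im_eq_imp_reduce_eq im_eq_reduce im_sym im_trans by metis

end

context poset_on
begin

abbreviation IM :: "('a \<times> 'a) list set monoid" where
  "IM \<equiv> interval_monoid A r"

definition im_class :: "('a \<times> 'a) list \<Rightarrow> ('a \<times> 'a) list set" where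
  "im_class w = {v. im_eq A r w v}"

lemma carrier_IM: "carrier IM = im_class ` {w. gen_word w}"
  by (simp add: carrier_interval_monoid im_class_def[abs_def])

lemma one_IM: "\<one>\<^bsub>IM\<^esub> = im_class []"
  by (simp add: interval_monoid_def im_class_def)

lemma im_class_eq: "gen_word u \<Longrightarrow> im_class u = {v. gen_word v \<and> reduce v = reduce u}"
  by (auto simp: im_class_def im_eq_iff)

lemma im_class_eq_iff:
  "gen_word u \<Longrightarrow> gen_word v \<Longrightarrow> im_class u = im_class v \<longleftrightarrow> reduce u = reduce v"
  by (auto simp: im_class_eq)

lemma mult_im_class:
  assumes "gen_word u" "gen_word v"
  shows "im_class u \<otimes>\<^bsub>IM\<^esub> im_class v = im_class (u @ v)"
proof (intro equalityI subsetI)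
  fix w assume "w \<in> im_class u \<otimes>\<^bsub>IM\<^esub> im_class v"
  then obtain u' v' where "im_eq A r u u'" "im_eq A r v v'" "im_eq A r (u' @ v') w"
    by (auto simp: mult_interval_monoid im_class_def)
  then show "w \<in> im_class (u @ v)" unfolding im_class_def using im_cong im_trans by blast
next
  fix w assume "w \<in> im_class (u @ v)"
  moreover have "u \<in> im_class u" "v \<in> im_class v" using assms by (auto simp: im_class_def im_refl)
  ultimately show "w \<in> im_class u \<otimes>\<^bsub>IM\<^esub> im_class v"
    by (auto simp: mult_interval_monoid im_class_def)
qed

lemma carrier_IM_reduced: "carrier IM = im_class ` {w. gen_word w \<and> reduced w}"
proof -
  have "im_class w = im_class (reduce w)" if "gen_word w" for w
    using that gen_word_reduce reduce_idem by (simp add: im_class_eq_iff)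
  then show ?thesis using gen_word_reduce reduced_reduce by (auto simp: carrier_IM)
qed

lemma im_class_reduced_eq_iff:
  "gen_word a \<Longrightarrow> gen_word b \<Longrightarrow> reduced a \<Longrightarrow> reduced b \<Longrightarrow> im_class a = im_class b \<longleftrightarrow> a = b"
  by (simp add: im_class_eq_iff reduce_reduced)

lemma gen_word_glue: "gen_word a \<Longrightarrow> gen_word b \<Longrightarrow> reduced a \<Longrightarrow> reduced b \<Longrightarrow> gen_word (glue a b)"
  using gen_word_reduce[of "a @ b"] by (simp add: reduce_append_reduced)

lemma reduced_glue: "gen_word a \<Longrightarrow> gen_word b \<Longrightarrow> reduced a \<Longrightarrow> reduced b \<Longrightarrow> reduced (glue a b)"
  using reduced_reduce[of "a @ b"] by (simp add: reduce_append_reduced)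

lemma mult_im_class_reduced:
  assumes "gen_word a" "gen_word b" "reduced a" "reduced b"
  shows "im_class a \<otimes>\<^bsub>IM\<^esub> im_class b = im_class (glue a b)"
proof -
  have "im_class (a @ b) = im_class (reduce (a @ b))"
    using assms gen_word_reduce[of "a @ b"] reduce_idem[of "a @ b"] by (simp add: im_class_eq_iff)
  then show ?thesis using assms by (simp add: mult_im_class reduce_append_reduced)
qed

lemma monoid_IM: "monoid IM"
  by (rule monoidI) (auto simp: carrier_IM one_IM mult_im_class)

lemma conical_IM: "conical IM"
  unfolding conical_def carrier_IM_reduced one_IM
proof (clarify)
  fix a b assume ab: "gen_word a" "reduced a" "gen_word b" "reduced b"
    and "im_class a \<otimes>\<^bsub>IM\<^esub> im_class b = im_class []"
  then have "im_class (glue a b) = im_class []" by (simp add: mult_im_class_reduced)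
  then have "glue a b = []"
    using ab im_class_reduced_eq_iff[of "glue a b" "[]"] by (simp add: gen_word_glue reduced_glue)
  then show "im_class a = im_class []" by (simp add: glue_eq_Nil_iff)
qed

lemma left_cancellative_IM: "left_cancellative IM"
  unfolding left_cancellative_def carrier_IM_reduced
  by (auto simp: mult_im_class_reduced im_class_reduced_eq_iff gen_word_glue reduced_glue
      dest: glue_left_cancel)

lemma prefix_le_glue: "gen_word d \<Longrightarrow> gen_word x \<Longrightarrow> prefix_le r d (glue d x)"
proof (induction d rule: induct_list012)
  case (2 g)
  then show ?case by (cases x) (auto simp: glue_def refl_on)
next
  case (3 g g' d)
  then show ?case by (simp add: glue_Cons)
qed simp

lemma prefix_le_Cons_same:
  "snd g \<in> A \<Longrightarrow> prefix_le r d a \<Longrightarrow> prefix_le r (g # d) (g # a)"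
  by (cases d) (auto simp: refl_on)

lemma prefix_le_imp_glue:
  "prefix_le r d a \<Longrightarrow> gen_word d \<Longrightarrow> gen_word a \<Longrightarrow> reduced a \<Longrightarrow>
   \<exists>x. gen_word x \<and> reduced x \<and> glue d x = a"
proof (induction d arbitrary: a rule: induct_list012)
  case 1
  then show ?case by auto
next
  case (2 g)
  then obtain h a' where a: "a = h # a'" by (cases a) auto
  show ?case
  proof (cases "snd g = snd h")
    case True
    then have "g = h" using 2 a by (simp add: prod_eq_iff)
    moreover have "gen_word a'" "reduced a'" using 2 a by (auto dest: reduced_Cons_tl)
    moreover have "glue [h] a' = a" using 2 a by (cases a') (simp_all add: glue_def)
    ultimately show ?thesis by blast
  next
    case False
    let ?x = "(snd g, snd h) # a'"
    have "gen_word ?x" using 2 a by auto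
    moreover have "reduced ?x" using False 2 a by (cases a') simp_all
    moreover have "glue [g] ?x = a" using 2 a by (simp add: glue_def prod_eq_iff)
    ultimately show ?thesis by blast
  qed
next
  case (3 g g' d)
  then obtain a' where a: "a = g # a'" by (cases a) auto
  then have "prefix_le r (g' # d) a'" "gen_word a'" "reduced a'"
    using 3 by (auto dest: reduced_Cons_tl)
  then obtain x where "gen_word x" "reduced x" "glue (g' # d) x = a'"
    using "3.IH"(2)[of a'] 3(4) by auto
  then show ?case using a by (auto simp: glue_Cons)
qed

lemma left_div_im_class_iff:
  assumes d: "gen_word d" "reduced d" and a: "gen_word a" "reduced a"
  shows "left_div IM (im_class d) (im_class a) \<longleftrightarrow> prefix_le r d a"
proof
  assume "left_div IM (im_class d) (im_class a)"
  then obtain x where x: "gen_word x" "reduced x" "im_class a = im_class d \<otimes>\<^bsub>IM\<^esub> im_class x"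
    by (auto simp: left_div_def carrier_IM_reduced)
  then have "a = glue d x"
    using d a by (simp add: mult_im_class_reduced im_class_reduced_eq_iff gen_word_glue reduced_glue)
  then show "prefix_le r d a" using prefix_le_glue d x by simp
next
  assume "prefix_le r d a"
  then obtain x where "gen_word x" "reduced x" "glue d x = a" using prefix_le_imp_glue d a by blast
  then show "left_div IM (im_class d) (im_class a)"
    using d by (auto simp: left_div_def carrier_IM_reduced mult_im_class_reduced)
qed

end

section \<open>Left gcds\<close>

definition is_meet_on :: "'a set \<Rightarrow> ('a \<Rightarrow> 'a \<Rightarrow> bool) \<Rightarrow> 'a \<Rightarrow> 'a \<Rightarrow> 'a \<Rightarrow> bool" where
  "is_meet_on A r m t t' \<longleftrightarrow> m \<in> A \<and> r m t \<and> r m t' \<and> (\<forall>u\<in>A. r u t \<longrightarrow> r u t' \<longrightarrow> r u m)"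

locale poset_on_bounded_meets = poset_on +
  fixes meet :: "'a \<Rightarrow> 'a \<Rightarrow> 'a"
  assumes bounded_meet:
    "s \<in> A \<Longrightarrow> t \<in> A \<Longrightarrow> t' \<in> A \<Longrightarrow> r s t \<Longrightarrow> r s t' \<Longrightarrow> is_meet_on A r (meet t t') t t'"
begin

lemma meet_of_letters:
  assumes "g \<in> im_gens A r" "h \<in> im_gens A r" "fst g = fst h"
  shows "is_meet_on A r (meet (snd g) (snd h)) (snd g) (snd h)"
    and "r (fst g) (meet (snd g) (snd h))"
  using bounded_meet[of "fst g" "snd g" "snd h"] assms by (auto simp: is_meet_on_def)

lemma gen_word_prefix_meet: "gen_word a \<Longrightarrow> gen_word b \<Longrightarrow> gen_word (prefix_meet meet a b)"
proof (induction a arbitrary: b)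
  case (Cons g a)
  then show ?case
    using meet_of_letters[of g] by (cases b) (auto simp: is_meet_on_def)
qed simp

lemma prefix_le_prefix_meet:
  "gen_word a \<Longrightarrow> gen_word b \<Longrightarrow>
   prefix_le r (prefix_meet meet a b) a \<and> prefix_le r (prefix_meet meet a b) b"
proof (induction a arbitrary: b)
  case (Cons g a)
  then show ?case
    using meet_of_letters[of g] prefix_le_Cons_same[of g]
    by (cases b) (auto simp: is_meet_on_def)
qed simp

lemma prefix_meet_greatest:
  "gen_word a \<Longrightarrow> gen_word b \<Longrightarrow> gen_word c \<Longrightarrow> reduced c \<Longrightarrow>
   prefix_le r c a \<Longrightarrow> prefix_le r c b \<Longrightarrow> prefix_le r c (prefix_meet meet a b)"
proof (induction a arbitrary: b c)
  case (Cons g a)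
  consider "b = [] \<or> c = []" | h b' k c' where "b = h # b'" "c = k # c'"
    by (meson neq_Nil_conv)
  then show ?case
  proof cases
    case 1
    then show ?thesis using Cons.prems by (cases c) auto
  next
    case 2
    show ?thesis
    proof (cases "c' = []")
      case True
      then have k: "fst k = fst g" "fst k = fst h" "r (snd k) (snd g)" "r (snd k) (snd h)"
        using Cons.prems 2 by auto
      show ?thesis
      proof (cases "g = h")
        case False
        have gh: "g \<in> im_gens A r" "h \<in> im_gens A r" using Cons.prems 2 by auto
        have "r (snd k) (meet (snd g) (snd h))"
          using meet_of_letters(1)[OF gh] Cons.prems 2 k by (auto simp: is_meet_on_def)
        moreover have "fst g \<noteq> meet (snd g) (snd h)"
          using calculation Cons.prems 2 True k antisym_on by fastforce
        ultimately show ?thesis using False k 2 True by simp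
      qed (use k 2 True in simp)
    next
      case False
      then have "k = g" "k = h" "prefix_le r c' a" "prefix_le r c' b'"
        using Cons.prems 2 by (auto simp: neq_Nil_conv)
      moreover have "prefix_le r c' (prefix_meet meet a b')"
        using Cons calculation 2 by (auto dest: reduced_Cons_tl)
      ultimately show ?thesis using 2 Cons.prems prefix_le_Cons_same[of g] by auto
    qed
  qed
qed simp

lemma has_left_gcds_IM: "has_left_gcds IM"
  unfolding has_left_gcds_def carrier_IM_reduced
proof (clarify)
  fix a b assume a: "gen_word a" "reduced a" and b: "gen_word b" "reduced b"
  let ?d = "prefix_meet meet a b"
  have d: "gen_word ?d" "reduced ?d" using gen_word_prefix_meet reduced_prefix_meet a b by auto
  have "is_left_gcd IM (im_class ?d) (im_class a) (im_class b)"
    unfolding is_left_gcd_def carrier_IM_reduced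
    using a b d prefix_le_prefix_meet prefix_meet_greatest
    by (auto simp: left_div_im_class_iff)
  then show "\<exists>d. is_left_gcd IM d (im_class a) (im_class b)" ..
qed

end

section \<open>Reversal\<close>

definition reverse_word :: "('a \<times> 'a) list \<Rightarrow> ('a \<times> 'a) list" where
  "reverse_word w = rev (map prod.swap w)"

lemma reverse_word_reverse_word [simp]: "reverse_word (reverse_word w) = w"
  by (simp add: reverse_word_def rev_map comp_def)

lemma reverse_word_append [simp]: "reverse_word (u @ v) = reverse_word v @ reverse_word u"
  by (simp add: reverse_word_def)

lemma gen_word_reverse_word: "set w \<subseteq> im_gens A r \<Longrightarrow> set (reverse_word w) \<subseteq> im_gens A r\<inverse>\<inverse>"
  by (auto simp: reverse_word_def)

lemma im_eq_reverse_word: "im_eq A r u v \<Longrightarrow> im_eq A r\<inverse>\<inverse> (reverse_word u) (reverse_word v)"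
proof (induction rule: im_eq.induct)
  case (im_refl w)
  then show ?case using gen_word_reverse_word by (blast intro: im_eq.im_refl)
next
  case (im_sym u v)
  then show ?case by (blast intro: im_eq.im_sym)
next
  case (im_trans u v w)
  then show ?case by (blast intro: im_eq.im_trans)
next
  case (im_unit x)
  then show ?case by (auto simp: reverse_word_def intro: im_eq.im_unit)
next
  case (im_split x y z)
  then show ?case by (auto simp: reverse_word_def intro: im_eq.im_split)
next
  case (im_cong u u' v v')
  then show ?case by (auto intro: im_eq.im_cong)
qed

lemma reverse_word_im_class:
  "reverse_word ` {v. im_eq A r w v} = {v. im_eq A r\<inverse>\<inverse> (reverse_word w) v}"
proof (intro equalityI subsetI)
  fix v assume "v \<in> {v. im_eq A r\<inverse>\<inverse> (reverse_word w) v}"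
  then have "im_eq A r w (reverse_word v)"
    using im_eq_reverse_word[of A "r\<inverse>\<inverse>" "reverse_word w" v] by simp
  then show "v \<in> reverse_word ` {v. im_eq A r w v}" by (auto intro: image_eqI[of _ _ "reverse_word v"])
qed (auto simp: im_eq_reverse_word)

lemma reverse_word_carrier:
  "X \<in> carrier (interval_monoid A r) \<Longrightarrow> reverse_word ` X \<in> carrier (interval_monoid A r\<inverse>\<inverse>)"
  unfolding carrier_interval_monoid using reverse_word_im_class gen_word_reverse_word by blast

lemma reverse_word_bij:
  "bij_betw (image reverse_word) (carrier (interval_monoid A r)) (carrier (interval_monoid A r\<inverse>\<inverse>))"
proof (rule bij_betw_byWitness[where f' = "image reverse_word"])
  show "image reverse_word ` carrier (interval_monoid A r) \<subseteq> carrier (interval_monoid A r\<inverse>\<inverse>)"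
    using reverse_word_carrier by blast
  show "image reverse_word ` carrier (interval_monoid A r\<inverse>\<inverse>) \<subseteq> carrier (interval_monoid A r)"
    using reverse_word_carrier[of _ A "r\<inverse>\<inverse>"] by auto
qed (simp_all add: image_image)

lemma reverse_word_mult:
  "reverse_word ` (X \<otimes>\<^bsub>interval_monoid A r\<^esub> Y) =
   reverse_word ` Y \<otimes>\<^bsub>interval_monoid A r\<inverse>\<inverse>\<^esub> reverse_word ` X"
proof -
  have "reverse_word ` (X \<otimes>\<^bsub>interval_monoid A r\<^esub> Y) =
    (\<Union>u\<in>X. \<Union>v\<in>Y. {w. im_eq A r\<inverse>\<inverse> (reverse_word v @ reverse_word u) w})"
    by (simp add: mult_interval_monoid image_UN reverse_word_im_class)
  then show ?thesis by (auto simp: mult_interval_monoid)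
qed

section \<open>Face posets of simplicial complexes\<close>

lemma simplicial_complex_subface:
  "simplicial_complex V K \<Longrightarrow> s \<in> K \<Longrightarrow> t \<subseteq> s \<Longrightarrow> t \<noteq> {} \<Longrightarrow> t \<in> K"
  unfolding simplicial_complex_def by blast

lemma face_poset_bounded_meets:
  assumes "simplicial_complex V K"
  shows "poset_on_bounded_meets K (\<subseteq>) (\<inter>)"
proof (unfold_locales)
  fix s t t' assume "s \<in> K" "t \<in> K" "t' \<in> K" "s \<subseteq> t" "s \<subseteq> t'"
  moreover have "s \<noteq> {}" using assms \<open>s \<in> K\<close> by (auto simp: simplicial_complex_def)
  ultimately have "t \<inter> t' \<in> K" using simplicial_complex_subface[OF assms, of t "t \<inter> t'"] by blast
  then show "is_meet_on K (\<subseteq>) (t \<inter> t') t t'" by (auto simp: is_meet_on_def)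
qed auto

lemma face_poset_opposite_bounded_meets:
  assumes "simplicial_complex V K"
  shows "poset_on_bounded_meets K (\<subseteq>)\<inverse>\<inverse> (\<union>)"
proof (unfold_locales)
  fix s t t' assume "s \<in> K" "t \<in> K" "t' \<in> K" "(\<subseteq>)\<inverse>\<inverse> s t" "(\<subseteq>)\<inverse>\<inverse> s t'"
  moreover have "t \<noteq> {}" using assms \<open>t \<in> K\<close> by (auto simp: simplicial_complex_def)
  ultimately have "t \<union> t' \<in> K" using simplicial_complex_subface[OF assms, of s "t \<union> t'"] by auto
  then show "is_meet_on K (\<subseteq>)\<inverse>\<inverse> (t \<union> t') t t'" by (auto simp: is_meet_on_def)
qed auto

theorem corollary7p9:
  fixes V :: "'v set" and K :: "'v set set"
  assumes "simplicial_complex V K"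
  shows "gcd_monoid (interval_monoid K (\<subseteq>))"
proof -
  interpret P: poset_on_bounded_meets K "(\<subseteq>)" "(\<inter>)"
    using face_poset_bounded_meets[OF assms] .
  interpret Q: poset_on_bounded_meets K "(\<subseteq>)\<inverse>\<inverse>" "(\<union>)"
    using face_poset_opposite_bounded_meets[OF assms] .
  note reversal = P.monoid_IM reverse_word_bij reverse_word_mult
  have "right_cancellative P.IM"
    using anti_iso_right_cancellative[OF reversal Q.left_cancellative_IM] .
  moreover have "has_right_gcds P.IM"
    using anti_iso_has_right_gcds[OF reversal Q.has_left_gcds_IM] .
  ultimately show ?thesis
    using P.monoid_IM P.conical_IM P.left_cancellative_IM P.has_left_gcds_IM
    by (simp add: gcd_monoid_iff)
qed

end
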